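(* Let $\{\mathcal Z_n\}$ be a Galton–Watson process with countably many types and irreducible mean progeny matrix $M$, and assume that the dichotomy property holds. If there exist $\lambda\le1$ and a vector $\boldsymbol x=(x_1,x_2,\dots)$ with $x_i>0$ for all $i$, $\sum_i x_i<\infty$ and $\boldsymbol xM\le\lambda\boldsymbol x$ componentwise, then $\boldsymbol q=\boldsymbol 1$.
   Context: A (multitype) Galton–Watson process with type set $\mathcal S=\{1,2,3,\dots\}$ is $\{\mathcal Z_n=(Z_{n1},Z_{n2},\dots)\}_{n\in\mathbb N}$, $Z_{n\ell}$ the number of type-$\ell$ individuals in generation $n$, started from one individual of type $\varphi_0$; $|\mathcal Z_n|=\sum_\ell Z_{n\ell}$. The mean progeny matrix is $M_{ij}=\partial P_i/\partial s_j|_{\boldsymbol s=\boldsymbol 1}$ (assumed finite), $P_i$ being the progeny generating function of type $i$. Global extinction: $q_i=\mathbb P[\lim_n|\mathcal Z_n|=0\mid\varphi_0=i]$. The dichotomy property holds if for every initial type $i$, with probability 1 either $|\mathcal Z_n|=0$ eventually or $|\mathcal Z_n|\to\infty$. *)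

theory Defs
  imports "HOL-Probability.Probability" "HOL-Library.Multiset"
begin

text \<open>Offspring of an individual = the multiset of the types of its children.
  Types are indexed by nat (type k here corresponds to type k+1 of the paper).\<close>

instance multiset :: (countable) countable
proof (rule countable_classI[of "\<lambda>M. to_nat (SOME xs. mset xs = M)"])
  fix M N :: "'a multiset"
  assume "to_nat (SOME xs. mset xs = M) = to_nat (SOME xs. mset xs = N)"
  then have "(SOME xs. mset xs = M) = (SOME xs. mset xs = N)" by simp
  moreover have "mset (SOME xs. mset xs = M) = M" by (rule someI_ex) (rule ex_mset)
  moreover have "mset (SOME xs. mset xs = N) = N" by (rule someI_ex) (rule ex_mset)
  ultimately show "M = N" by metis
qed

definition gw_step :: "(nat \<Rightarrow> nat multiset pmf) \<Rightarrow> nat multiset \<Rightarrow> nat multiset pmf" where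
  "gw_step p Z = foldr (\<lambda>i acc. bind_pmf (p i) (\<lambda>c. map_pmf (\<lambda>r. c + r) acc))
                    (sorted_list_of_multiset Z) (return_pmf {#})"

definition gw_law :: "(nat \<Rightarrow> nat multiset pmf) \<Rightarrow> nat \<Rightarrow> (nat \<Rightarrow> nat multiset) measure \<Rightarrow> bool" where
  "gw_law p i0 P \<longleftrightarrow> prob_space P \<and>
     sets P = sets (PiM UNIV (\<lambda>_. count_space UNIV)) \<and>
     (\<forall>n h. emeasure P {\<omega> \<in> space P. \<forall>k\<le>n. \<omega> k = h k}
        = ennreal ((if h 0 = {#i0#} then 1 else 0) * (\<Prod>k<n. pmf (gw_step p (h k)) (h (Suc k)))))"

definition mean_matrix :: "(nat \<Rightarrow> nat multiset pmf) \<Rightarrow> nat \<Rightarrow> nat \<Rightarrow> real" where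
  "mean_matrix p i j = measure_pmf.expectation (p i) (\<lambda>c. real (count c j))"

definition finite_means :: "(nat \<Rightarrow> nat multiset pmf) \<Rightarrow> bool" where
  "finite_means p \<longleftrightarrow> (\<forall>i j. integrable (measure_pmf (p i)) (\<lambda>c. real (count c j)))"

text \<open>Irreducible nonnegative matrix: for all i j some (M^n)_{ij} > 0 with n \<ge> 1,
  i.e. there is a path of positive entries from i to j.\<close>
definition irreducible_matrix :: "(nat \<Rightarrow> nat \<Rightarrow> real) \<Rightarrow> bool" where
  "irreducible_matrix M \<longleftrightarrow> (\<forall>i j. (i, j) \<in> {(a, b). M a b > 0}\<^sup>+)"

definition extinct_event :: "(nat \<Rightarrow> nat multiset) set" where
  "extinct_event = {\<omega>. \<exists>n. \<omega> n = {#}}"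

definition dichotomy :: "(nat \<Rightarrow> (nat \<Rightarrow> nat multiset) measure) \<Rightarrow> bool" where
  "dichotomy P \<longleftrightarrow> (\<forall>i. AE \<omega> in P i. (\<exists>n. \<omega> n = {#}) \<or>
        filterlim (\<lambda>n. size (\<omega> n)) at_top sequentially)"

end

theory Submission
  imports Defs
begin

(* Let y be the positive summable row vector with y M <= lam y <= y.
   Writing m_n(i,j) for the expected number of type-j individuals in generation n of the
   process started from type i, the means satisfy m_{n+1} = m_n M, so by induction
   y_i m_n(i,j) <= y_j, and summing over j gives  y_i E_i |Z_n| <= sum_j y_j < infinity.
   By Markov's inequality  K P_i(|Z_n| >= K) <= const  uniformly in n and K, which forces
   P_i(|Z_n| -> infinity) = 0; the dichotomy property then yields almost sure extinction. *)

lemma sum_list_eq_suminf_count: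
  fixes g :: "nat \<Rightarrow> ennreal"
  shows "sum_list (map g xs) = (\<Sum>k. of_nat (count (mset xs) k) * g k)"
proof (induction xs)
  case Nil then show ?case by simp
next
  case (Cons a xs)
  have "(\<Sum>k. of_nat (count (mset (a#xs)) k) * g k)
      = (\<Sum>k. (if k = a then g k else 0) + of_nat (count (mset xs) k) * g k)"
    by (intro suminf_cong) (auto simp: distrib_right)
  also have "\<dots> = (\<Sum>k. (if k = a then g k else 0)) + (\<Sum>k. of_nat (count (mset xs) k) * g k)"
    by (rule suminf_add[symmetric]) auto
  also have "(\<Sum>k. (if k = a then g k else 0)) = g a"
    using sums_single[of a g] sums_unique by metis
  finally show ?case using Cons by simp
qed

lemma size_eq_suminf_count: "(of_nat (size z) :: ennreal) = (\<Sum>k. of_nat (count z k))"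
proof -
  have "of_nat (size z) = sum_list (map (\<lambda>_. 1::ennreal) (sorted_list_of_multiset z))"
    by (simp add: sum_list_triv size_mset[symmetric] del: size_mset)
  also have "\<dots> = (\<Sum>k. of_nat (count z k))"
    using sum_list_eq_suminf_count[of "\<lambda>_. 1" "sorted_list_of_multiset z"] by simp
  finally show ?thesis .
qed

section \<open>Expected offspring counts of one generation step\<close>

text \<open>The mean progeny matrix as an extended nonnegative real; it is always defined.\<close>
definition offspring_mean :: "(nat \<Rightarrow> nat multiset pmf) \<Rightarrow> nat \<Rightarrow> nat \<Rightarrow> ennreal" where
  "offspring_mean p a j = (\<integral>\<^sup>+ c. of_nat (count c j) \<partial>measure_pmf (p a))"

lemma offspring_mean_eq_mean_matrix:
  assumes "finite_means p"
  shows "offspring_mean p k j = ennreal (mean_matrix p k j)"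
proof -
  have int: "integrable (measure_pmf (p k)) (\<lambda>c. real (count c j))"
    using assms by (simp add: finite_means_def)
  have "offspring_mean p k j = (\<integral>\<^sup>+ c. ennreal (real (count c j)) \<partial>measure_pmf (p k))"
    by (simp add: offspring_mean_def ennreal_of_nat_eq_real_of_nat)
  also have "\<dots> = ennreal (mean_matrix p k j)"
    unfolding mean_matrix_def by (rule nn_integral_eq_integral[OF int]) simp
  finally show ?thesis .
qed

lemma mean_matrix_nonneg: "mean_matrix p k j \<ge> 0"
  unfolding mean_matrix_def by simp

lemma foldr_reproduction_mean:
  "(\<integral>\<^sup>+ w. of_nat (count w j) \<partial>measure_pmf
      (foldr (\<lambda>i acc. bind_pmf (p i) (\<lambda>c. map_pmf (\<lambda>r. c + r) acc)) xs (return_pmf {#})))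
   = sum_list (map (\<lambda>a. offspring_mean p a j) xs)"
proof (induction xs)
  case Nil then show ?case by simp
next
  case (Cons a xs)
  let ?acc = "foldr (\<lambda>i acc. bind_pmf (p i) (\<lambda>c. map_pmf (\<lambda>r. c + r) acc)) xs (return_pmf {#})"
  have "(\<integral>\<^sup>+ w. of_nat (count w j) \<partial>measure_pmf
          (foldr (\<lambda>i acc. bind_pmf (p i) (\<lambda>c. map_pmf (\<lambda>r. c + r) acc)) (a#xs) (return_pmf {#})))
     = (\<integral>\<^sup>+ c. (\<integral>\<^sup>+ r. of_nat (count c j) + of_nat (count r j) \<partial>measure_pmf ?acc) \<partial>measure_pmf (p a))"
    by simp
  also have "\<dots> = (\<integral>\<^sup>+ c. of_nat (count c j) + (\<integral>\<^sup>+ r. of_nat (count r j) \<partial>measure_pmf ?acc)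
                     \<partial>measure_pmf (p a))"
    by (subst nn_integral_add) (auto simp: measure_pmf.emeasure_space_1)
  also have "\<dots> = offspring_mean p a j + (\<integral>\<^sup>+ r. of_nat (count r j) \<partial>measure_pmf ?acc)"
    by (subst nn_integral_add) (auto simp: measure_pmf.emeasure_space_1 offspring_mean_def)
  finally show ?case using Cons by simp
qed

lemma gw_step_mean:
  "(\<integral>\<^sup>+ w. of_nat (count w j) \<partial>measure_pmf (gw_step p z))
   = (\<Sum>k. of_nat (count z k) * offspring_mean p k j)"
  unfolding gw_step_def foldr_reproduction_mean sum_list_eq_suminf_count by simp

section \<open>Laws and means of the generations\<close>

primrec gen_law :: "(nat \<Rightarrow> nat multiset pmf) \<Rightarrow> nat \<Rightarrow> nat \<Rightarrow> nat multiset pmf" where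
  "gen_law p i 0 = return_pmf {#i#}"
| "gen_law p i (Suc n) = bind_pmf (gen_law p i n) (gw_step p)"

text \<open>Expected number of type-j individuals in generation n, i.e. the entry (i,j) of M^n.\<close>
definition gen_mean :: "(nat \<Rightarrow> nat multiset pmf) \<Rightarrow> nat \<Rightarrow> nat \<Rightarrow> nat \<Rightarrow> ennreal" where
  "gen_mean p i n j = (\<integral>\<^sup>+ z. of_nat (count z j) \<partial>measure_pmf (gen_law p i n))"

lemma gen_mean_Suc: "gen_mean p i (Suc n) j = (\<Sum>k. gen_mean p i n k * offspring_mean p k j)"
proof -
  have "gen_mean p i (Suc n) j
      = (\<integral>\<^sup>+ z. (\<Sum>k. of_nat (count z k) * offspring_mean p k j) \<partial>measure_pmf (gen_law p i n))"
    by (simp add: gen_mean_def gw_step_mean)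
  also have "\<dots> = (\<Sum>k. (\<integral>\<^sup>+ z. of_nat (count z k) * offspring_mean p k j \<partial>measure_pmf (gen_law p i n)))"
    by (rule nn_integral_suminf) simp
  also have "\<dots> = (\<Sum>k. gen_mean p i n k * offspring_mean p k j)"
    by (simp add: gen_mean_def nn_integral_multc)
  finally show ?thesis .
qed

lemma gen_mean_subinvariant:
  assumes subinv: "\<And>j. (\<Sum>k. y k * offspring_mean p k j) \<le> y j"
  shows "y i * gen_mean p i n j \<le> y j"
proof (induction n arbitrary: j)
  case 0
  then show ?case by (auto simp: gen_mean_def)
next
  case (Suc n)
  have "y i * gen_mean p i (Suc n) j = (\<Sum>k. (y i * gen_mean p i n k) * offspring_mean p k j)"
    by (simp add: gen_mean_Suc mult.assoc)
  also have "\<dots> \<le> (\<Sum>k. y k * offspring_mean p k j)"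
    by (intro suminf_le mult_right_mono Suc) auto
  also have "\<dots> \<le> y j" by (rule subinv)
  finally show ?case .
qed

lemma expected_size_bound:
  assumes subinv: "\<And>j. (\<Sum>k. y k * offspring_mean p k j) \<le> y j"
  shows "y i * (\<integral>\<^sup>+ z. of_nat (size z) \<partial>measure_pmf (gen_law p i n)) \<le> (\<Sum>j. y j)"
proof -
  have "(\<integral>\<^sup>+ z. of_nat (size z) \<partial>measure_pmf (gen_law p i n)) = (\<Sum>j. gen_mean p i n j)"
    unfolding size_eq_suminf_count gen_mean_def by (rule nn_integral_suminf) simp
  then have "y i * (\<integral>\<^sup>+ z. of_nat (size z) \<partial>measure_pmf (gen_law p i n)) = (\<Sum>j. y i * gen_mean p i n j)"
    by simp
  also have "\<dots> \<le> (\<Sum>j. y j)"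
    by (intro suminf_le gen_mean_subinvariant[OF subinv]) auto
  finally show ?thesis .
qed

lemma subinvariant_ennreal:
  assumes means: "finite_means p" and lam_le: "lam \<le> 1" and xpos: "\<And>i. x i > 0"
    and xM: "\<And>j. summable (\<lambda>i. x i * mean_matrix p i j) \<and>
                 (\<Sum>i. x i * mean_matrix p i j) \<le> lam * x j"
  shows "(\<Sum>k. ennreal (x k) * offspring_mean p k j) \<le> ennreal (x j)"
proof -
  have "(\<Sum>k. ennreal (x k) * offspring_mean p k j) = (\<Sum>k. ennreal (x k * mean_matrix p k j))"
    using xpos by (simp add: offspring_mean_eq_mean_matrix[OF means] ennreal_mult less_imp_le
                             mean_matrix_nonneg)
  also have "\<dots> = ennreal (\<Sum>k. x k * mean_matrix p k j)"
    using xM xpos by (intro suminf_ennreal2 mult_nonneg_nonneg less_imp_le mean_matrix_nonneg) auto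
  also have "\<dots> \<le> ennreal (x j)"
  proof (rule ennreal_leI)
    have "lam * x j \<le> x j" using lam_le xpos[of j] by (simp add: mult_le_cancel_right1)
    then show "(\<Sum>k. x k * mean_matrix p k j) \<le> x j" using xM[of j] by linarith
  qed
  finally show ?thesis .
qed

section \<open>The path-space law and its marginals\<close>

lemma gw_law_space: assumes "gw_law p i P" shows "space P = UNIV"
proof -
  have "sets P = sets (PiM UNIV (\<lambda>_. count_space UNIV) :: (nat \<Rightarrow> nat multiset) measure)"
    using assms by (simp add: gw_law_def)
  then have "space P = space (PiM UNIV (\<lambda>_. count_space UNIV) :: (nat \<Rightarrow> nat multiset) measure)"
    by (rule sets_eq_imp_space_eq)
  then show ?thesis by (simp add: space_PiM)
qed

lemma gw_law_measurable_generation: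
  assumes "gw_law p i P"
  shows "(\<lambda>\<omega>. \<omega> k) \<in> measurable P (count_space UNIV)"
proof -
  have s: "sets P = sets (PiM UNIV (\<lambda>_. count_space UNIV) :: (nat \<Rightarrow> nat multiset) measure)"
    using assms by (simp add: gw_law_def)
  show ?thesis
    by (subst measurable_cong_sets[OF s refl]) (rule measurable_component_singleton, simp)
qed

lemma gw_law_cylinder_sets:
  assumes "gw_law p i P"
  shows "{\<omega>. \<forall>k\<le>m. \<omega> (n+k) = h k} \<in> sets P"
proof -
  note [measurable] = gw_law_measurable_generation[OF assms]
  have "{\<omega>\<in>space P. \<forall>k\<le>m. \<omega> (n+k) = h k} \<in> sets P" by measurable
  then show ?thesis using gw_law_space[OF assms] by simp
qed

lemma cylinder_split:
  shows "{\<omega>. \<forall>k\<le>m. \<omega> (Suc n + k) = h k} = (\<Union>y. {\<omega>. \<forall>k\<le>Suc m. \<omega> (n+k) = case_nat y h k})"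
    and "disjoint_family (\<lambda>y. {\<omega>. \<forall>k\<le>Suc m. \<omega> (n+k) = case_nat y h k})"
proof -
  show "{\<omega>. \<forall>k\<le>m. \<omega> (Suc n + k) = h k} = (\<Union>y. {\<omega>. \<forall>k\<le>Suc m. \<omega> (n+k) = case_nat y h k})"
  proof (intro set_eqI iffI)
    fix \<omega> assume a: "\<omega> \<in> {\<omega>. \<forall>k\<le>m. \<omega> (Suc n + k) = h k}"
    have "\<forall>k\<le>Suc m. \<omega> (n+k) = case_nat (\<omega> n) h k"
    proof (intro allI impI)
      fix k assume "k \<le> Suc m"
      then show "\<omega> (n + k) = case_nat (\<omega> n) h k" using a by (cases k) auto
    qed
    then show "\<omega> \<in> (\<Union>y. {\<omega>. \<forall>k\<le>Suc m. \<omega> (n+k) = case_nat y h k})" by blast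
  qed auto
  show "disjoint_family (\<lambda>y. {\<omega>. \<forall>k\<le>Suc m. \<omega> (n+k) = case_nat y h k})"
    unfolding disjoint_family_on_def by (force dest: spec[where x=0])
qed

lemma gw_law_cylinder:
  assumes law: "gw_law p i P"
  shows "emeasure P {\<omega>. \<forall>k\<le>m. \<omega> (n+k) = h k}
     = ennreal (pmf (gen_law p i n) (h 0) * (\<Prod>k<m. pmf (gw_step p (h k)) (h (Suc k))))"
proof (induction n arbitrary: m h)
  case 0
  have "emeasure P {\<omega> \<in> space P. \<forall>k\<le>m. \<omega> k = h k}
        = ennreal ((if h 0 = {#i#} then 1 else 0) * (\<Prod>k<m. pmf (gw_step p (h k)) (h (Suc k))))"
    using law by (simp add: gw_law_def)
  then show ?case using gw_law_space[OF law] by (simp add: pmf_return)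
next
  case (Suc n)
  let ?tail = "\<Prod>k<m. pmf (gw_step p (h k)) (h (Suc k))"
  have "emeasure P {\<omega>. \<forall>k\<le>m. \<omega> (Suc n + k) = h k}
      = (\<integral>\<^sup>+ y. emeasure P {\<omega>. \<forall>k\<le>Suc m. \<omega> (n+k) = case_nat y h k} \<partial>count_space UNIV)"
    unfolding cylinder_split(1)
    by (rule emeasure_UN_countable)
      (auto intro: gw_law_cylinder_sets[OF law] cylinder_split(2))
  also have "\<dots> = (\<integral>\<^sup>+ y. ennreal (pmf (gen_law p i n) y) * ennreal (pmf (gw_step p y) (h 0))
                     * ennreal ?tail \<partial>count_space UNIV)"
  proof (rule nn_integral_cong)
    fix y
    have "(\<Prod>k<Suc m. pmf (gw_step p (case_nat y h k)) (case_nat y h (Suc k))) = pmf (gw_step p y) (h 0) * ?tail"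
      by (subst prod.lessThan_Suc_shift) simp
    then show "emeasure P {\<omega>. \<forall>k\<le>Suc m. \<omega> (n+k) = case_nat y h k}
        = ennreal (pmf (gen_law p i n) y) * ennreal (pmf (gw_step p y) (h 0)) * ennreal ?tail"
      unfolding Suc.IH by (simp add: ennreal_mult' prod_nonneg mult.assoc)
  qed
  also have "\<dots> = (\<integral>\<^sup>+ y. ennreal (pmf (gw_step p y) (h 0)) \<partial>measure_pmf (gen_law p i n)) * ennreal ?tail"
    by (subst nn_integral_multc) (auto simp: nn_integral_measure_pmf)
  also have "\<dots> = ennreal (pmf (gen_law p i (Suc n)) (h 0) * ?tail)"
    by (simp add: ennreal_pmf_bind ennreal_mult' prod_nonneg)
  finally show ?case .
qed

lemma gw_law_marginal:
  assumes law: "gw_law p i P"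
  shows "emeasure P {\<omega>. \<omega> n \<in> S} = emeasure (measure_pmf (gen_law p i n)) S"
proof -
  define X where "X z = {\<omega>::nat \<Rightarrow> nat multiset. \<forall>k\<le>0. \<omega> (n+k) = (\<lambda>_. z) k}" for z
  have generation_eq: "{\<omega>. \<omega> n \<in> S} = (\<Union>z\<in>S. X z)" by (auto simp: X_def)
  have X_sets: "X z \<in> sets P" for z unfolding X_def by (rule gw_law_cylinder_sets[OF law])
  have "emeasure P {\<omega>. \<omega> n \<in> S} = (\<integral>\<^sup>+ z. emeasure P (X z) \<partial>count_space S)"
    unfolding generation_eq by (rule emeasure_UN_countable[OF X_sets])
      (auto simp: X_def disjoint_family_on_def)
  also have "\<dots> = (\<integral>\<^sup>+ z. ennreal (pmf (gen_law p i n) z) * indicator S z \<partial>count_space UNIV)"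
    unfolding X_def gw_law_cylinder[OF law]
    by (subst nn_integral_restrict_space[symmetric])
      (auto simp: restrict_count_space intro!: nn_integral_cong)
  also have "\<dots> = emeasure (measure_pmf (gen_law p i n)) S"
    by (simp add: nn_integral_measure_pmf[symmetric])
  finally show ?thesis .
qed

text \<open>Markov's inequality for the population size, combined with the mean bound.\<close>
lemma gw_law_tail_bound:
  assumes law: "gw_law p i P"
    and subinv: "\<And>j. (\<Sum>k. y k * offspring_mean p k j) \<le> y j"
  shows "y i * (of_nat K * emeasure P {\<omega>. K \<le> size (\<omega> N)}) \<le> (\<Sum>j. y j)"
proof -
  have "of_nat K * emeasure P {\<omega>. K \<le> size (\<omega> N)}
      = (\<integral>\<^sup>+ z. of_nat K * indicator {z. K \<le> size z} z \<partial>measure_pmf (gen_law p i N))"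
    using gw_law_marginal[OF law, of N "{z. K \<le> size z}"] by (simp add: nn_integral_cmult_indicator)
  also have "\<dots> \<le> (\<integral>\<^sup>+ z. of_nat (size z) \<partial>measure_pmf (gen_law p i N))"
    by (intro nn_integral_mono) (auto simp: indicator_def)
  finally have "y i * (of_nat K * emeasure P {\<omega>. K \<le> size (\<omega> N)})
      \<le> y i * (\<integral>\<^sup>+ z. of_nat (size z) \<partial>measure_pmf (gen_law p i N))"
    by (rule mult_left_mono) simp
  also have "\<dots> \<le> (\<Sum>j. y j)" by (rule expected_size_bound[OF subinv])
  finally show ?thesis .
qed

lemma gw_size_tails_bounded:
  assumes law: "\<And>i. gw_law p i (P i)"
    and means: "finite_means p" and lam_le: "lam \<le> 1"
    and xpos: "\<And>i. x i > 0" and xsum: "summable x"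
    and xM: "\<And>j. summable (\<lambda>i. x i * mean_matrix p i j) \<and>
                 (\<Sum>i. x i * mean_matrix p i j) \<le> lam * x j"
  shows "of_nat K * emeasure (P i) {\<omega>\<in>space (P i). K \<le> size (\<omega> N)} \<le> ennreal (suminf x / x i)"
proof -
  have sum_x: "(\<Sum>j. ennreal (x j)) = ennreal (suminf x)"
    using xpos xsum by (intro suminf_ennreal2) (auto intro: less_imp_le)
  have "ennreal (x i) * (of_nat K * emeasure (P i) {\<omega>\<in>space (P i). K \<le> size (\<omega> N)})
      \<le> ennreal (suminf x)"
    using gw_law_tail_bound[OF law subinvariant_ennreal[OF means lam_le xpos xM], of i K N]
    by (simp add: gw_law_space[OF law] sum_x)
  also have "\<dots> = ennreal (x i) * ennreal (suminf x / x i)"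
    using xpos[of i] by (simp add: ennreal_mult'[symmetric])
  finally show ?thesis
    using xpos[of i] by (simp add: ennreal_mult_le_mult_iff)
qed

section \<open>Uniformly bounded tails exclude divergence\<close>

text \<open>If K P(f_N >= K) <= C for all K and N, then f_n does not tend to infinity a.s.:
  the events "eventually f_n >= K" have probability at most C/K.\<close>
lemma (in prob_space) AE_not_tendsto_top_if_tails_bounded:
  fixes f :: "nat \<Rightarrow> 'a \<Rightarrow> nat"
  assumes meas: "\<And>n. f n \<in> measurable M (count_space UNIV)"
    and tails: "\<And>K N. of_nat K * emeasure M {\<omega>\<in>space M. K \<le> f N \<omega>} \<le> ennreal C"
  shows "AE \<omega> in M. \<not> filterlim (\<lambda>n. f n \<omega>) at_top sequentially"
proof -
  note [measurable] = meas
  define E where "E K N = {\<omega>\<in>space M. \<forall>n\<ge>N. K \<le> f n \<omega>}" for K N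
  define D where "D = (\<Inter>K. \<Union>N. E K N)"
  have E_sets [measurable]: "E K N \<in> sets M" for K N unfolding E_def by measurable
  have D_sets: "D \<in> sets M" unfolding D_def by measurable
  have D_bound: "ennreal (real K * prob D) \<le> ennreal C" for K
  proof -
    have "emeasure M D \<le> emeasure M (\<Union>N. E K N)"
      by (rule emeasure_mono) (auto simp: D_def)
    also have "\<dots> = (SUP N. emeasure M (E K N))"
      by (rule SUP_emeasure_incseq[symmetric]) (auto simp: incseq_def E_def)
    also have "\<dots> \<le> (SUP N. emeasure M {\<omega>\<in>space M. K \<le> f N \<omega>})"
      by (intro SUP_mono' emeasure_mono) (auto simp: E_def)
    finally have "of_nat K * emeasure M D \<le> of_nat K * (SUP N. emeasure M {\<omega>\<in>space M. K \<le> f N \<omega>})"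
      by (rule mult_left_mono) simp
    also have "\<dots> = (SUP N. of_nat K * emeasure M {\<omega>\<in>space M. K \<le> f N \<omega>})"
      by (simp add: SUP_mult_left_ennreal image_image)
    also have "\<dots> \<le> ennreal C" by (rule SUP_least) (rule tails)
    finally show "ennreal (real K * prob D) \<le> ennreal C"
      by (simp add: emeasure_eq_measure ennreal_mult' ennreal_of_nat_eq_real_of_nat)
  qed
  have "prob D = 0"
  proof (rule ccontr)
    assume "prob D \<noteq> 0"
    then have pos: "prob D > 0" using measure_nonneg[of M D] by linarith
    obtain K :: nat where "max 0 C / prob D < real K" using reals_Archimedean2 by blast
    with pos have "max 0 C < real K * prob D" by (simp add: divide_less_eq)
    then have "ennreal C < ennreal (real K * prob D)" by (intro ennreal_lessI) auto
    with D_bound[of K] show False by simp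
  qed
  then have "AE \<omega> in M. \<omega> \<notin> D"
    using D_sets by (intro AE_not_in) (simp add: null_sets_def emeasure_eq_measure)
  with AE_space show ?thesis
  proof eventually_elim
    case (elim \<omega>)
    show ?case
    proof
      assume "filterlim (\<lambda>n. f n \<omega>) at_top sequentially"
      then have "\<forall>K. \<exists>N. \<forall>n\<ge>N. K \<le> f n \<omega>"
        by (auto simp: filterlim_at_top eventually_sequentially)
      with elim show False by (auto simp: D_def E_def)
    qed
  qed
qed

theorem mainTheorem8:
  fixes p :: "nat \<Rightarrow> nat multiset pmf"
    and P :: "nat \<Rightarrow> (nat \<Rightarrow> nat multiset) measure"
    and x :: "nat \<Rightarrow> real" and lam :: real
  assumes law: "\<And>i. gw_law p i (P i)"
    and means: "finite_means p"
    and irred: "irreducible_matrix (mean_matrix p)"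
    and dich: "dichotomy P"
    and lam_le: "lam \<le> 1"
    and xpos: "\<And>i. x i > 0"
    and xsum: "summable x"
    and xM: "\<And>j. summable (\<lambda>i. x i * mean_matrix p i j) \<and>
                 (\<Sum>i. x i * mean_matrix p i j) \<le> lam * x j"
  shows "\<forall>i. measure (P i) extinct_event = 1"
proof
  fix i
  interpret prob_space "P i" using law[of i] by (simp add: gw_law_def)
  note [measurable] = gw_law_measurable_generation[OF law[of i]]
  have "of_nat K * emeasure (P i) {\<omega>\<in>space (P i). K \<le> size (\<omega> N)} \<le> ennreal (suminf x / x i)"
    for K N using gw_size_tails_bounded[OF law means lam_le xpos xsum xM] .
  then have no_div: "AE \<omega> in P i. \<not> filterlim (\<lambda>n. size (\<omega> n)) at_top sequentially"
    by (intro AE_not_tendsto_top_if_tails_bounded) simp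
  have "AE \<omega> in P i. (\<exists>n. \<omega> n = {#}) \<or> filterlim (\<lambda>n. size (\<omega> n)) at_top sequentially"
    using dich by (simp add: dichotomy_def)
  with no_div have "AE \<omega> in P i. \<exists>n. \<omega> n = {#}"
    by eventually_elim blast
  then have "prob {\<omega>\<in>space (P i). \<exists>n. \<omega> n = {#}} = 1"
    by (subst prob_Collect_eq_1) auto
  then show "measure (P i) extinct_event = 1"
    by (simp add: gw_law_space[OF law] extinct_event_def)
qed

end
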